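(* In the curved-exam game described in the context: (1) In any pure Nash equilibrium $x^*$, if $x_i^*=0$ then $x_j^*=0$ for every student $j$ with $\alpha_j<\alpha_i$; and if $x_i^*>0$ then $x_j^*>0$ for every student $j$ with $\alpha_j>\alpha_i$. (2) Let $0\le k\le n$ and let $x^{*(k)}$ be a $k$-don't care equilibrium. Then for each of the top $n-k$ students $i$, $$x_i^{*(k)}=\frac{(n-1)\alpha_i-n(1-\alpha_i)\big(m-\bar x^{*(k)}\big)}{n-\alpha_i},\qquad\text{where}\qquad \bar x^{*(k)}=\frac{(n-1)(m+1)S_2-(n-k)(m+1-1/n)}{(n-1)(S_2-1)+k},\quad S_2:=\sum_{i=k+1}^n\frac1{n-\alpha_{(i)}}.$$
   Context: The curved-exam game: fix $n\ge2$, abilities $\alpha_1,\dots,\alpha_n\in(0,1)$, target mean $m\in(0,1)$. Student $i$ chooses $x_i\in[0,1]$; $\bar x=\frac1n\sum_j x_j$, $\bar x_{-i}=\frac1{n-1}\sum_{j\ne i}x_j$. Grade $G_i(x)=x_i+\max(m-\bar x,0)$ (not truncated at 1); payoff $U_i(x)=G_i(x)^{\alpha_i}(1-x_i)^{1-\alpha_i}$. Let $\alpha_{(1)}\le\alpha_{(2)}\le\dots\le\alpha_{(n)}$ be the order statistics of the abilities (students relabelled accordingly). A $k$-don't care equilibrium $x^{*(k)}$ is a pure Nash equilibrium with an exam curve ($\bar x<m$) in which the $k$ students with the lowest abilities $\alpha_{(1)},\dots,\alpha_{(k)}$ exert zero effort and the top $n-k$ students (abilities $\alpha_{(k+1)},\dots,\alpha_{(n)}$)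 exert positive effort; $\bar x^{*(k)}$ denotes its mean effort. For $k=0$ this is a curved equilibrium with all efforts positive. *)

theory Defs
  imports Complex_Main
begin

definition xbar :: "nat \<Rightarrow> (nat \<Rightarrow> real) \<Rightarrow> real" where
  "xbar n x = (\<Sum>j<n. x j) / real n"

definition grade :: "nat \<Rightarrow> real \<Rightarrow> (nat \<Rightarrow> real) \<Rightarrow> nat \<Rightarrow> real" where
  "grade n m x i = x i + max (m - xbar n x) 0"

definition payoff :: "nat \<Rightarrow> (nat \<Rightarrow> real) \<Rightarrow> real \<Rightarrow> (nat \<Rightarrow> real) \<Rightarrow> nat \<Rightarrow> real" where
  "payoff n a m x i = grade n m x i powr a i * (1 - x i) powr (1 - a i)"

definition nash :: "nat \<Rightarrow> (nat \<Rightarrow> real) \<Rightarrow> real \<Rightarrow> (nat \<Rightarrow> real) \<Rightarrow> bool" where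
  "nash n a m x \<longleftrightarrow>
     (\<forall>i<n. 0 \<le> x i \<and> x i \<le> 1) \<and>
     (\<forall>i<n. \<forall>y. 0 \<le> y \<and> y \<le> 1 \<longrightarrow> payoff n a m (x(i := y)) i \<le> payoff n a m x i)"

text \<open>k-don't care equilibrium w.r.t. a relabelling sigma (sigma j = student with
  the (j+1)-th smallest ability): curved Nash equilibrium where the k lowest-ability
  students exert zero effort and the others positive effort.\<close>
definition k_dont_care :: "nat \<Rightarrow> (nat \<Rightarrow> real) \<Rightarrow> real \<Rightarrow> (nat \<Rightarrow> nat) \<Rightarrow> nat \<Rightarrow> (nat \<Rightarrow> real) \<Rightarrow> bool" where
  "k_dont_care n a m \<sigma> k x \<longleftrightarrow>
     nash n a m x \<and> xbar n x < m \<and>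
     (\<forall>j<k. x (\<sigma> j) = 0) \<and> (\<forall>j. k \<le> j \<and> j < n \<longrightarrow> x (\<sigma> j) > 0)"

end

(* At a curved profile, with curve c = m - \bar x, a student's grade is affine in her own effort
   with slope 1 - 1/n, so her log-payoff a ln(grade) + (1 - a) ln(1 - effort) is differentiable and
   equilibrium efforts obey the first-order conditions (n - 1) a (1 - x) = n (1 - a) (x + c) for
   x > 0 and (n - 1) a <= n (1 - a) c for x = 0 (zero effort forces a curve, otherwise the payoff
   is 0). Both conditions compare (n - 1 + n c) a - n c with 0, which is increasing in the ability a;
   this gives (1). Solving the interior condition for x gives the efforts in (2), and summing them
   over the n - k active students yields a linear equation for \bar x. *)

theory Submission
  imports Defs
begin

lemma sum_fun_upd:
  fixes f :: "'a \<Rightarrow> 'b::ab_group_add"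
  assumes "finite A" "i \<in> A"
  shows "sum (f(i := y)) A = sum f A - f i + y"
  using assms by (simp add: sum.delta_remove sum_diff1)

lemma DERIV_nonpos_of_right_local_max:
  fixes f :: "real \<Rightarrow> real"
  assumes der: "DERIV f x :> l" and d: "0 < d"
    and le: "\<forall>h>0. h < d \<longrightarrow> f (x + h) \<le> f x"
  shows "l \<le> 0"
proof (rule ccontr)
  assume "\<not> l \<le> 0"
  then obtain d' where d': "d' > 0" "\<forall>h>0. h < d' \<longrightarrow> f x < f (x + h)"
    using DERIV_pos_inc_right[OF der] by auto
  define h where "h = min d d' / 2"
  have "0 < h" "h < d" "h < d'" using d d' by (auto simp: h_def)
  with le d' show False by force
qed

lemma payoff_fun_upd_pos:
  assumes "0 < y" "y < 1"
  shows "0 < payoff n a m (x(i := y)) i"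
proof -
  have "0 < grade n m (x(i := y)) i"
    using assms by (simp add: grade_def add_pos_nonneg)
  then show ?thesis using assms by (simp add: payoff_def)
qed

lemma nash_payoff_pos:
  assumes N: "nash n a m x" and i: "i < n"
  shows "0 < payoff n a m x i"
proof -
  have "payoff n a m (x(i := 1/2)) i \<le> payoff n a m x i"
    using N i unfolding nash_def by auto
  then show ?thesis using payoff_fun_upd_pos[of "1/2" n a m x i] by simp
qed

lemma nash_effort_lt_1:
  assumes N: "nash n a m x" and i: "i < n" and ai: "a i < 1"
  shows "x i < 1"
proof (rule ccontr)
  assume "\<not> x i < 1"
  with N i have "x i = 1" unfolding nash_def by force
  then have "payoff n a m x i = 0" using ai by (simp add: payoff_def)
  with nash_payoff_pos[OF N i] show False by simp
qed

lemma nash_zero_effort_imp_curved: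
  assumes N: "nash n a m x" and i: "i < n" and ai: "0 < a i" and zero: "x i = 0"
  shows "xbar n x < m"
proof (rule ccontr)
  assume "\<not> xbar n x < m"
  then have "payoff n a m x i = 0" using zero ai by (simp add: payoff_def grade_def)
  with nash_payoff_pos[OF N i] show False by simp
qed

text \<open>Log-payoff of a student of ability \<open>b\<close> who deviates from effort \<open>x\<close> to \<open>y\<close>
  when the curve at \<open>x\<close> is \<open>c\<close>; valid while the curve \<open>c + (x - y) / n\<close> stays positive.\<close>
definition deviation_log_payoff :: "nat \<Rightarrow> real \<Rightarrow> real \<Rightarrow> real \<Rightarrow> real \<Rightarrow> real" where
  "deviation_log_payoff n b c x y = b * ln (y + c + (x - y) / real n) + (1 - b) * ln (1 - y)"

lemma deviation_log_payoff_deriv: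
  assumes "0 < x + c" "x < 1"
  shows "DERIV (deviation_log_payoff n b c x) x :> b * (1 - 1 / real n) / (x + c) - (1 - b) / (1 - x)"
proof -
  have "DERIV (\<lambda>y. y + c + (x - y) / real n) x :> 1 - 1 / real n"
    by (cases "n = 0") (auto intro!: derivative_eq_intros simp: diff_divide_distrib)
  from DERIV_chain2[OF DERIV_ln_divide this]
  have ln_grade: "DERIV (\<lambda>y. ln (y + c + (x - y) / real n)) x :> (1 - 1 / real n) / (x + c)"
    using assms(1) by (simp add: mult.commute)
  have ln_leisure: "DERIV (\<lambda>y. ln (1 - y)) x :> - 1 / (1 - x)"
    using assms by (auto intro!: derivative_eq_intros)
  have "DERIV (deviation_log_payoff n b c x) x
          :> b * ((1 - 1 / real n) / (x + c)) + (1 - b) * (- 1 / (1 - x))"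
    unfolding deviation_log_payoff_def
    by (rule DERIV_add[OF DERIV_cmult[OF ln_grade] DERIV_cmult[OF ln_leisure]])
  then show ?thesis by simp
qed

lemma payoff_fun_upd_curved:
  assumes i: "i < n" and curved: "0 < m - xbar n x + (x i - y) / real n"
  shows "payoff n a m (x(i := y)) i
           = (y + (m - xbar n x) + (x i - y) / real n) powr a i * (1 - y) powr (1 - a i)"
proof -
  have "sum (x(i := y)) {..<n} = sum x {..<n} - x i + y"
    using i by (intro sum_fun_upd) simp_all
  then have "m - xbar n (x(i := y)) = m - xbar n x + (x i - y) / real n"
    by (simp add: xbar_def diff_divide_distrib add_divide_distrib)
  then have "grade n m (x(i := y)) i = y + (m - xbar n x) + (x i - y) / real n"
    using curved by (simp add: grade_def)
  then show ?thesis by (simp add: payoff_def)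
qed

lemma nash_deviation_log_payoff_le:
  assumes N: "nash n a m x" and i: "i < n" and ai: "0 < a i" "a i < 1"
    and curved: "xbar n x < m"
    and y: "0 \<le> y" "y < 1" "y - x i < real n * (m - xbar n x)"
  shows "deviation_log_payoff n (a i) (m - xbar n x) (x i) y
           \<le> deviation_log_payoff n (a i) (m - xbar n x) (x i) (x i)"
proof -
  define c where "c = m - xbar n x"
  have n: "0 < real n" using i by simp
  have c: "0 < c" using curved by (simp add: c_def)
  have x: "0 \<le> x i" "x i < 1"
    using N i nash_effort_lt_1[OF N i ai(2)] unfolding nash_def by auto
  have ln_payoff: "ln (payoff n a m (x(i := z)) i) = deviation_log_payoff n (a i) c (x i) z"
    and payoff_pos: "0 < payoff n a m (x(i := z)) i"
    if z: "0 \<le> z" "z < 1" "z - x i < real n * c" for z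
  proof -
    have "(z - x i) / real n < c"
      using z(3) n by (simp add: divide_less_eq mult.commute)
    then have "0 < c + (x i - z) / real n"
      by (simp add: diff_divide_distrib)
    then have G: "0 < z + c + (x i - z) / real n" and
      P: "payoff n a m (x(i := z)) i = (z + c + (x i - z) / real n) powr a i * (1 - z) powr (1 - a i)"
      using z(1) i payoff_fun_upd_curved[of i n m x z a] by (auto simp: c_def)
    show "0 < payoff n a m (x(i := z)) i" using G z(2) P by simp
    show "ln (payoff n a m (x(i := z)) i) = deviation_log_payoff n (a i) c (x i) z"
      using G z(2) unfolding P deviation_log_payoff_def by (simp add: ln_mult ln_powr)
  qed
  have "payoff n a m (x(i := y)) i \<le> payoff n a m (x(i := x i)) i"
    using N i y unfolding nash_def by auto
  then have "ln (payoff n a m (x(i := y)) i) \<le> ln (payoff n a m (x(i := x i)) i)"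
    using payoff_pos[of y] y c_def by simp
  then show ?thesis
    using ln_payoff[of y] ln_payoff[of "x i"] y x n c by (simp add: c_def)
qed

lemma nash_positive_effort_eq:
  assumes N: "nash n a m x" and i: "i < n" and ai: "0 < a i" "a i < 1"
    and curved: "xbar n x < m" and pos: "0 < x i"
  shows "x i = ((real n - 1) * a i - real n * (1 - a i) * (m - xbar n x)) / (real n - a i)"
proof -
  define c where "c = m - xbar n x"
  have n: "1 \<le> real n" using i by simp
  have c: "0 < c" using curved by (simp add: c_def)
  have x1: "x i < 1" using nash_effort_lt_1[OF N i ai(2)] .
  define d where "d = min (real n * c) (min (x i) (1 - x i))"
  have "0 < d" using n c pos x1 by (simp add: d_def)
  moreover have "\<forall>y. \<bar>x i - y\<bar> < d \<longrightarrow>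
      deviation_log_payoff n (a i) c (x i) y \<le> deviation_log_payoff n (a i) c (x i) (x i)"
    using nash_deviation_log_payoff_le[OF N i ai curved]
    by (auto simp: d_def c_def abs_less_iff)
  moreover have "DERIV (deviation_log_payoff n (a i) c (x i)) (x i)
      :> a i * (1 - 1 / real n) / (x i + c) - (1 - a i) / (1 - x i)"
    using c pos x1 by (intro deviation_log_payoff_deriv) simp_all
  ultimately have "a i * (1 - 1 / real n) / (x i + c) - (1 - a i) / (1 - x i) = 0"
    using DERIV_local_max by blast
  then have "a i * (1 - 1 / real n) * (1 - x i) = (1 - a i) * (x i + c)"
    using c pos x1 by (simp add: frac_eq_eq)
  moreover have "a i * (real n - 1) * (1 - x i) = real n * (a i * (1 - 1 / real n) * (1 - x i))"
    using n by (simp add: field_simps)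
  ultimately have "a i * (real n - 1) * (1 - x i) = real n * (1 - a i) * (x i + c)"
    by simp
  then have "x i * (real n - a i) = (real n - 1) * a i - real n * (1 - a i) * c"
    by (simp add: algebra_simps)
  moreover have "0 < real n - a i" using n ai by simp
  ultimately show ?thesis by (simp add: c_def eq_divide_eq)
qed

lemma nash_zero_effort_threshold:
  assumes N: "nash n a m x" and i: "i < n" and ai: "0 < a i" "a i < 1" and zero: "x i = 0"
  shows "(real n - 1) * a i \<le> real n * (1 - a i) * (m - xbar n x)"
proof -
  define c where "c = m - xbar n x"
  have curved: "xbar n x < m" using nash_zero_effort_imp_curved[OF N i ai(1) zero] .
  have n: "1 \<le> real n" using i by simp
  have c: "0 < c" using curved by (simp add: c_def)
  define d where "d = min (real n * c) 1"
  have "0 < d" using n c by (simp add: d_def)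
  moreover have "\<forall>h>0. h < d \<longrightarrow>
      deviation_log_payoff n (a i) c (x i) (x i + h) \<le> deviation_log_payoff n (a i) c (x i) (x i)"
    using nash_deviation_log_payoff_le[OF N i ai curved] zero by (simp add: d_def c_def)
  moreover have "DERIV (deviation_log_payoff n (a i) c (x i)) (x i)
      :> a i * (1 - 1 / real n) / c - (1 - a i)"
    using deviation_log_payoff_deriv[of "x i" c] c zero by simp
  ultimately have "a i * (1 - 1 / real n) / c - (1 - a i) \<le> 0"
    using DERIV_nonpos_of_right_local_max by blast
  then show ?thesis using n c by (simp add: c_def field_simps)
qed

lemma nash_positive_effort_threshold:
  assumes N: "nash n a m x" and i: "i < n" and ai: "0 < a i" "a i < 1"
    and curved: "xbar n x < m" and pos: "0 < x i"
  shows "real n * (1 - a i) * (m - xbar n x) < (real n - 1) * a i"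
proof -
  have "0 < real n - a i" using i ai by linarith
  with pos show ?thesis
    unfolding nash_positive_effort_eq[OF assms] by (simp add: zero_less_divide_iff)
qed

lemma nash_zero_effort_of_lower_ability:
  assumes N: "nash n a m x" and ha: "\<forall>i<n. 0 < a i \<and> a i < 1"
    and i: "i < n" and j: "j < n" and zero: "x i = 0" and lower: "a j < a i"
  shows "x j = 0"
proof (rule ccontr)
  define c where "c = m - xbar n x"
  assume "x j \<noteq> 0"
  moreover have "0 \<le> x j" using N j unfolding nash_def by auto
  ultimately have pos: "0 < x j" by simp
  have ai: "0 < a i" "a i < 1" and aj: "0 < a j" "a j < 1" using ha i j by auto
  have curved: "xbar n x < m" using nash_zero_effort_imp_curved[OF N i ai(1) zero] .
  have "real n * (1 - a j) * c < (real n - 1) * a j"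
    using nash_positive_effort_threshold[OF N j aj curved pos] by (simp add: c_def)
  moreover have "(real n - 1) * a i \<le> real n * (1 - a i) * c"
    using nash_zero_effort_threshold[OF N i ai zero] by (simp add: c_def)
  ultimately have "0 < (a j - a i) * (real n - 1 + real n * c)"
    by (simp add: algebra_simps)
  moreover have "0 < real n - 1 + real n * c"
    using i curved by (simp add: c_def add_nonneg_pos)
  ultimately show False using lower by (simp add: zero_less_mult_iff)
qed

lemma nash_positive_effort_of_higher_ability:
  assumes N: "nash n a m x" and ha: "\<forall>i<n. 0 < a i \<and> a i < 1"
    and i: "i < n" and j: "j < n" and pos: "0 < x i" and higher: "a i < a j"
  shows "0 < x j"
proof (rule ccontr)
  assume "\<not> 0 < x j"
  with N j have "x j = 0" unfolding nash_def by force
  then have "x i = 0" using nash_zero_effort_of_lower_ability[OF N ha j i _ higher] by simp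
  with pos show False by simp
qed

lemma k_dont_care_effort:
  assumes K: "k_dont_care n a m \<sigma> k x" and ha: "\<forall>i<n. 0 < a i \<and> a i < 1"
    and \<sigma>: "bij_betw \<sigma> {..<n} {..<n}" and j: "k \<le> j" "j < n"
  shows "x (\<sigma> j) = ((real n - 1) * a (\<sigma> j) - real n * (1 - a (\<sigma> j)) * (m - xbar n x))
                      / (real n - a (\<sigma> j))"
proof -
  have "\<sigma> j < n" using \<sigma> j by (auto simp: bij_betw_def)
  then show ?thesis
    using K ha j nash_positive_effort_eq[of n a m x "\<sigma> j"] unfolding k_dont_care_def by auto
qed

lemma k_dont_care_sum_effort:
  assumes K: "k_dont_care n a m \<sigma> k x" and \<sigma>: "bij_betw \<sigma> {..<n} {..<n}" and kn: "k \<le> n"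
  shows "(\<Sum>i<n. x i) = (\<Sum>j\<in>{k..<n}. x (\<sigma> j))"
proof -
  have "(\<Sum>i<n. x i) = (\<Sum>j<n. x (\<sigma> j))"
    by (rule sum.reindex_bij_betw[OF \<sigma>, symmetric])
  also have "\<dots> = (\<Sum>j<k. x (\<sigma> j)) + (\<Sum>j\<in>{k..<n}. x (\<sigma> j))"
    using kn by (simp add: lessThan_atLeast0 sum.atLeastLessThan_concat)
  also have "(\<Sum>j<k. x (\<sigma> j)) = 0"
    using K unfolding k_dont_care_def by simp
  finally show ?thesis by simp
qed

lemma mean_effort_denominator_pos:
  fixes b :: "nat \<Rightarrow> real"
  assumes n: "2 \<le> n" and kn: "k \<le> n" and b: "\<forall>j\<in>{k..<n}. 0 < b j \<and> b j < 1"
  shows "0 < (real n - 1) * ((\<Sum>j\<in>{k..<n}. 1 / (real n - b j)) - 1) + real k"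
proof (cases "k = n")
  case False
  have "0 < b j \<and> b j < real n" if "j \<in> {k..<n}" for j
    using b n that by force
  then have "(\<Sum>j\<in>{k..<n}. 1 / real n) < (\<Sum>j\<in>{k..<n}. 1 / (real n - b j))"
    using False kn by (intro sum_strict_mono) (auto intro!: frac_less2)
  then have "real n - real k < real n * (\<Sum>j\<in>{k..<n}. 1 / (real n - b j))"
    using kn n by (simp add: of_nat_diff field_simps)
  then have "0 < (real n - 1) * (real n * (\<Sum>j\<in>{k..<n}. 1 / (real n - b j)) - (real n - real k))"
    using n by simp
  then have "0 < real n * ((real n - 1) * ((\<Sum>j\<in>{k..<n}. 1 / (real n - b j)) - 1) + real k)"
    by (simp add: algebra_simps)
  then show ?thesis by (simp add: zero_less_mult_iff)
qed simp

lemma k_dont_care_mean_effort_eq: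
  assumes n: "2 \<le> n" and ha: "\<forall>i<n. 0 < a i \<and> a i < 1"
    and \<sigma>: "bij_betw \<sigma> {..<n} {..<n}" and kn: "k \<le> n" and K: "k_dont_care n a m \<sigma> k x"
  defines "c \<equiv> m - xbar n x"
  shows "real n * xbar n x = real n * (real n - 1) * (1 + c) * (\<Sum>j\<in>{k..<n}. 1 / (real n - a (\<sigma> j)))
                              - (real n - real k) * (real n - 1 + real n * c)"
proof -
  have effort: "x (\<sigma> j) = real n * (real n - 1) * (1 + c) * (1 / (real n - a (\<sigma> j)))
                          - (real n - 1 + real n * c)"
    if j: "j \<in> {k..<n}" for j
  proof -
    have "\<sigma> j < n" using \<sigma> j by (auto simp: bij_betw_def)
    then have "a (\<sigma> j) < 1" using ha by blast
    moreover have "2 \<le> real n" using n by simp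
    ultimately have "0 < real n - a (\<sigma> j)" by linarith
    then show ?thesis
      using k_dont_care_effort[OF K ha \<sigma>, of j] j by (simp add: c_def field_simps)
  qed
  have "real n * xbar n x = (\<Sum>j\<in>{k..<n}. x (\<sigma> j))"
    using n k_dont_care_sum_effort[OF K \<sigma> kn] by (simp add: xbar_def)
  also have "\<dots> = real n * (real n - 1) * (1 + c) * (\<Sum>j\<in>{k..<n}. 1 / (real n - a (\<sigma> j)))
                  - (real n - real k) * (real n - 1 + real n * c)"
    using kn by (simp add: effort sum_subtractf sum_distrib_left of_nat_diff)
  finally show ?thesis .
qed

lemma k_dont_care_xbar:
  assumes n: "2 \<le> n" and ha: "\<forall>i<n. 0 < a i \<and> a i < 1"
    and \<sigma>: "bij_betw \<sigma> {..<n} {..<n}" and kn: "k \<le> n" and K: "k_dont_care n a m \<sigma> k x"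
  defines "S2 \<equiv> \<Sum>j\<in>{k..<n}. 1 / (real n - a (\<sigma> j))"
  shows "xbar n x = ((real n - 1) * (m + 1) * S2 - real (n - k) * (m + 1 - 1 / real n))
                     / ((real n - 1) * (S2 - 1) + real k)"
proof -
  have "real n * (m + 1 - 1 / real n) = real n * m + real n - 1"
    using n by (simp add: field_simps)
  then have "real n * ((real n - 1) * (m + 1) * S2 - real (n - k) * (m + 1 - 1 / real n))
      = real n * (real n - 1) * (m + 1) * S2 - (real n - real k) * (real n * m + real n - 1)"
    using kn by (simp add: of_nat_diff algebra_simps)
  also have "\<dots> = real n * (((real n - 1) * (S2 - 1) + real k) * xbar n x)"
    using k_dont_care_mean_effort_eq[OF n ha \<sigma> kn K] unfolding S2_def[symmetric]
    by (simp add: algebra_simps)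
  finally have "((real n - 1) * (S2 - 1) + real k) * xbar n x
      = (real n - 1) * (m + 1) * S2 - real (n - k) * (m + 1 - 1 / real n)"
    using n by simp
  moreover have "0 < (real n - 1) * (S2 - 1) + real k"
    using ha \<sigma> unfolding S2_def bij_betw_def
    by (intro mean_effort_denominator_pos[OF n kn]) auto
  ultimately show ?thesis by (simp add: eq_divide_eq mult.commute)
qed

theorem mainTheorem13:
  fixes n :: nat and a :: "nat \<Rightarrow> real" and m :: real
  assumes hn: "n \<ge> 2"
    and ha: "\<forall>i<n. 0 < a i \<and> a i < 1"
    and hm: "0 < m" "m < 1"
  shows
    "(\<forall>x. nash n a m x \<longrightarrow>
        (\<forall>i<n. \<forall>j<n. x i = 0 \<and> a j < a i \<longrightarrow> x j = 0) \<and>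
        (\<forall>i<n. \<forall>j<n. x i > 0 \<and> a j > a i \<longrightarrow> x j > 0))
     \<and>
     (\<forall>\<sigma> k x. bij_betw \<sigma> {..<n} {..<n} \<and>
        (\<forall>p q. p \<le> q \<and> q < n \<longrightarrow> a (\<sigma> p) \<le> a (\<sigma> q)) \<and>
        k \<le> n \<and> k_dont_care n a m \<sigma> k x \<longrightarrow>
        (let S2 = (\<Sum>j\<in>{k..<n}. 1 / (real n - a (\<sigma> j))) in
          xbar n x = ((real n - 1) * (m + 1) * S2 - real (n - k) * (m + 1 - 1 / real n))
                     / ((real n - 1) * (S2 - 1) + real k)) \<and>
        (\<forall>j. k \<le> j \<and> j < n \<longrightarrow>
          x (\<sigma> j) = ((real n - 1) * a (\<sigma> j) - real n * (1 - a (\<sigma> j)) * (m - xbar n x))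
                      / (real n - a (\<sigma> j))))"
proof (intro conjI allI impI)
  show "x j = 0" if "nash n a m x" "i < n" "j < n" "x i = 0 \<and> a j < a i" for x i j
    using nash_zero_effort_of_lower_ability[OF _ ha] that by blast
  show "x j > 0" if "nash n a m x" "i < n" "j < n" "x i > 0 \<and> a j > a i" for x i j
    using nash_positive_effort_of_higher_ability[OF _ ha] that by blast
qed (use k_dont_care_xbar[OF hn ha] k_dont_care_effort[OF _ ha] in \<open>auto simp: Let_def\<close>)

end
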